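(* The normalizer of $\operatorname{PC}^{+}$ in $\operatorname{PC}^{\bowtie}$ is $\operatorname{PC}^{\pm}$.
   Context: $X=[0,1[$. $\widehat{\operatorname{PC}^{\bowtie}}$ is the group of bijections $X\to X$ continuous outside a finite subset; $\widehat{\operatorname{PC}^{+}}$ is the subgroup of those $h$ for which there is a finite partition of $X$ into intervals $[a,b[$ with $h$ continuous and increasing on each $]a,b[$. With ${\mathfrak S}_{\mathrm{fin}}$ the normal subgroup of finitely supported permutations, $\operatorname{PC}^{\bowtie}=\widehat{\operatorname{PC}^{\bowtie}}/{\mathfrak S}_{\mathrm{fin}}$ and $\operatorname{PC}^{+}=\widehat{\operatorname{PC}^{+}}/{\mathfrak S}_{\mathrm{fin}}$. Let $\mathcal R\in\operatorname{PC}^{\bowtie}$ be the class of any bijection of $X$ agreeing with $x\mapsto 1-x$ outside a finite set. Define $\operatorname{PC}^{-}=\mathcal R\cdot\operatorname{PC}^{+}$ and $\operatorname{PC}^{\pm}=\operatorname{PC}^{+}\cup\operatorname{PC}^{-}$ (a subgroup). *)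

theory Defs
  imports "HOL-Analysis.Analysis"
begin

definition Xint :: "real set" where
  "Xint = {0..<1}"

text \<open>Hat PC-bowtie: bijections of X continuous (as maps X to X) outside a finite subset.
  Functions are real-valued functions; only their values on X matter.\<close>
definition PCbowtie_hat :: "(real \<Rightarrow> real) set" where
  "PCbowtie_hat = {f. bij_betw f Xint Xint \<and>
     (\<exists>F. finite F \<and> (\<forall>x \<in> Xint - F. continuous (at x within Xint) f))}"

definition PCplus_hat :: "(real \<Rightarrow> real) set" where
  "PCplus_hat = {f. bij_betw f Xint Xint \<and>
     (\<exists>(n::nat) (t::nat \<Rightarrow> real). t 0 = 0 \<and> t n = 1 \<and> (\<forall>i<n. t i < t (Suc i)) \<and>
        (\<forall>i<n. continuous_on {t i<..<t (Suc i)} f \<and> strict_mono_on {t i<..<t (Suc i)} f))}"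

text \<open>Equality modulo finitely supported permutations: agreement on X outside a finite set.
  Two bijections of X define the same element of the quotient iff they are related.\<close>
definition fin_eq :: "(real \<Rightarrow> real) \<Rightarrow> (real \<Rightarrow> real) \<Rightarrow> bool" where
  "fin_eq f g \<longleftrightarrow> finite {x \<in> Xint. f x \<noteq> g x}"

definition invX :: "(real \<Rightarrow> real) \<Rightarrow> (real \<Rightarrow> real)" where
  "invX g = the_inv_into Xint g"

definition in_PCplus :: "(real \<Rightarrow> real) \<Rightarrow> bool" where
  "in_PCplus g \<longleftrightarrow> (\<exists>h \<in> PCplus_hat. fin_eq g h)"

text \<open>Class of g lies in PC-minus = R . PC-plus, where R is the class of any bijection
  of X agreeing with x |-> 1 - x outside a finite set.\<close>
definition in_PCminus :: "(real \<Rightarrow> real) \<Rightarrow> bool" where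
  "in_PCminus g \<longleftrightarrow> (\<exists>r \<in> PCbowtie_hat. \<exists>h \<in> PCplus_hat.
      fin_eq r (\<lambda>x. 1 - x) \<and> fin_eq g (r \<circ> h))"

definition in_PCpm :: "(real \<Rightarrow> real) \<Rightarrow> bool" where
  "in_PCpm g \<longleftrightarrow> in_PCplus g \<or> in_PCminus g"

text \<open>Class of g (g in hat PC-bowtie) normalizes PC-plus: [g] PC+ [g]^-1 = PC+,
  i.e. both [g] PC+ [g]^-1 and [g]^-1 PC+ [g] are contained in PC+.\<close>
definition normalizes_PCplus :: "(real \<Rightarrow> real) \<Rightarrow> bool" where
  "normalizes_PCplus g \<longleftrightarrow>
     (\<forall>h \<in> PCplus_hat. in_PCplus (g \<circ> h \<circ> invX g) \<and> in_PCplus (invX g \<circ> h \<circ> g))"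

end

theory Submission
  imports Defs
begin

(* A bijection g of X that is continuous off a finite set F is, on every interval avoiding F,
   continuous and injective, hence strictly increasing or strictly decreasing.
   PC+ is closed under composition and inversion, and conjugation by the reflection x \<mapsto> 1 - x
   preserves it, so every element of PC\<pm> normalizes PC+.
   Conversely, if g increases on all pieces then g \<in> PC+, and if it decreases on all pieces then
   R g \<in> PC+. Otherwise g decreases on some interval I1 and increases on some I2. Conjugating
   by g the rotation of the circle X that translates a subinterval J of I2 into I1 yields a map k
   with k (g x) = g (x + c) on J. If k were in PC+, the left side would increase with x on some
   smaller interval, while the right side decreases. *)

definition piecewise_incr :: "real set \<Rightarrow> (real \<Rightarrow> real) \<Rightarrow> bool" where
  "piecewise_incr S f \<longleftrightarrow> finite S \<and> (\<forall>a b. 0 \<le> a \<longrightarrow> b \<le> 1 \<longrightarrow> {a<..<b} \<inter> S = {} \<longrightarrow>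
     continuous_on {a<..<b} f \<and> strict_mono_on {a<..<b} f)"

lemma piecewise_incrD:
  assumes "piecewise_incr S f" "0 \<le> a" "b \<le> 1" "{a<..<b} \<inter> S = {}"
  shows "continuous_on {a<..<b} f" "strict_mono_on {a<..<b} f"
  using assms unfolding piecewise_incr_def by blast+

lemma Ioo_subset_Xint: "0 \<le> a \<Longrightarrow> b \<le> 1 \<Longrightarrow> {a<..<b} \<subseteq> Xint"
  by (auto simp: Xint_def)

lemma Ioo_subset_partition_piece:
  fixes t :: "nat \<Rightarrow> real"
  assumes "\<forall>i<n. t i < t (Suc i)" "t 0 \<le> a" "a < b" "b \<le> t n" "{a<..<b} \<inter> t ` {..n} = {}"
  shows "\<exists>i<n. {a<..<b} \<subseteq> {t i<..<t (Suc i)}"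
  using assms
proof (induction n)
  case 0
  then show ?case by simp
next
  case (Suc n)
  show ?case
  proof (cases "b \<le> t n")
    case True
    with Suc.prems have "\<exists>i<n. {a<..<b} \<subseteq> {t i<..<t (Suc i)}"
      by (intro Suc.IH) (auto simp: atMost_Suc)
    then show ?thesis
      using less_Suc_eq by blast
  next
    case False
    have "t n \<notin> {a<..<b}"
      using Suc.prems(5) by auto
    with False Suc.prems(4) show ?thesis
      by auto
  qed
qed

lemma sorted_list_of_set_gap:
  fixes A :: "'a::linorder set"
  assumes "finite A" "Suc i < length (sorted_list_of_set A)"
  shows "{sorted_list_of_set A ! i<..<sorted_list_of_set A ! Suc i} \<inter> A = {}"
proof (rule ccontr)
  let ?L = "sorted_list_of_set A"
  assume "{?L ! i<..<?L ! Suc i} \<inter> A \<noteq> {}"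
  then obtain x where x: "x \<in> A" "?L ! i < x" "x < ?L ! Suc i"
    by auto
  then have "x \<in> set ?L"
    using assms(1) by simp
  then obtain j where "j < length ?L" "?L ! j = x"
    by (auto simp: in_set_conv_nth)
  with x assms(2) show False
    using sorted_nth_mono[OF sorted_sorted_list_of_set, of j i A]
      sorted_nth_mono[OF sorted_sorted_list_of_set, of "Suc i" j A]
    by (cases "j \<le> i") auto
qed

lemma finite_partition_avoiding:
  fixes A :: "real set"
  assumes "finite A" "A \<subseteq> {0..1}" "0 \<in> A" "1 \<in> A"
  obtains n t where "t 0 = 0" "t n = 1" "\<forall>i<n. t i < t (Suc i)" "t ` {..n} \<subseteq> A"
    "\<forall>i<n. {t i<..<t (Suc i)} \<inter> A = {}"
proof
  define L where "L = sorted_list_of_set A"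
  have set_L: "set L = A" and strict: "sorted_wrt (<) L" and sorted: "sorted L"
    using assms(1) by (simp_all add: L_def strict_sorted_list_of_set)
  define n where "n = length L - 1"
  have n: "n < length L"
    using set_L assms(3) by (cases L) (auto simp: n_def)
  have index: "\<exists>j<length L. L ! j = x" if "x \<in> A" for x
    using that set_L in_set_conv_nth by metis
  have in_A: "L ! i \<in> A" if "i \<le> n" for i
    using that n set_L nth_mem by fastforce
  then show "(!) L ` {..n} \<subseteq> A"
    by auto
  obtain j where "j < length L" "L ! j = 0"
    using index[OF assms(3)] by blast
  with in_A[of 0] assms(2) show "L ! 0 = 0"
    using sorted_nth_mono[OF sorted, of 0 j] by fastforce
  obtain j where "j < length L" "L ! j = 1"
    using index[OF assms(4)] by blast
  with in_A[of n] assms(2) n show "L ! n = 1"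
    using sorted_nth_mono[OF sorted, of j n] by (fastforce simp: n_def)
  show "\<forall>i<n. L ! i < L ! Suc i"
    using sorted_wrt_nth_less[OF strict] n by (simp add: n_def)
  show "\<forall>i<n. {L ! i<..<L ! Suc i} \<inter> A = {}"
    using sorted_list_of_set_gap[OF assms(1)] n by (simp add: L_def n_def)
qed

lemma piecewise_incr_if_PCplus_hat:
  assumes "f \<in> PCplus_hat"
  obtains S where "piecewise_incr S f"
proof -
  obtain n t where t: "t 0 = 0" "t n = 1" "\<forall>i<n. t i < t (Suc i)"
    "\<forall>i<n. continuous_on {t i<..<t (Suc i)} f \<and> strict_mono_on {t i<..<t (Suc i)} f"
    using assms unfolding PCplus_hat_def by blast
  have "continuous_on {a<..<b} f \<and> strict_mono_on {a<..<b} f"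
    if ab: "0 \<le> a" "b \<le> 1" "{a<..<b} \<inter> t ` {..n} = {}" for a b :: real
  proof (cases "a < b")
    case True
    then obtain i where "i < n" "{a<..<b} \<subseteq> {t i<..<t (Suc i)}"
      using Ioo_subset_partition_piece[of n t a b] t ab by auto
    then show ?thesis
      using t(4) continuous_on_subset monotone_on_subset by metis
  qed (simp add: monotone_on_def)
  then show ?thesis
    using that unfolding piecewise_incr_def by blast
qed

lemma PCplus_hat_if_piecewise_incr:
  assumes bij: "bij_betw f Xint Xint" and S: "piecewise_incr S f"
  shows "f \<in> PCplus_hat"
proof -
  define A where "A = insert 0 (insert 1 (S \<inter> {0..1}))"
  have "finite A" "A \<subseteq> {0..1}" "0 \<in> A" "1 \<in> A"
    using S by (auto simp: A_def piecewise_incr_def)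
  then obtain n t where t: "t 0 = 0" "t n = 1" "\<forall>i<n. t i < t (Suc i)" "t ` {..n} \<subseteq> A"
    "\<forall>i<n. {t i<..<t (Suc i)} \<inter> A = {}"
    by (rule finite_partition_avoiding)
  have "continuous_on {t i<..<t (Suc i)} f \<and> strict_mono_on {t i<..<t (Suc i)} f" if "i < n" for i
  proof -
    have "0 \<le> t i" "t (Suc i) \<le> 1"
      using t(4) that \<open>A \<subseteq> {0..1}\<close> by (auto simp: subset_iff)
    moreover have "{t i<..<t (Suc i)} \<inter> S = {}"
      using t(5)[rule_format, OF that] calculation by (auto simp: A_def)
    ultimately show ?thesis
      using piecewise_incrD[OF S] by blast
  qed
  then show ?thesis
    unfolding PCplus_hat_def using bij t by blast
qed

lemma PCplus_hat_iff:
  "f \<in> PCplus_hat \<longleftrightarrow> bij_betw f Xint Xint \<and> (\<exists>S. piecewise_incr S f)"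
proof
  assume f: "f \<in> PCplus_hat"
  then have "bij_betw f Xint Xint"
    by (simp add: PCplus_hat_def)
  moreover obtain S where "piecewise_incr S f"
    using f by (rule piecewise_incr_if_PCplus_hat)
  ultimately show "bij_betw f Xint Xint \<and> (\<exists>S. piecewise_incr S f)"
    by blast
qed (blast intro: PCplus_hat_if_piecewise_incr)

lemma fin_eq_refl [simp]: "fin_eq f f"
  by (simp add: fin_eq_def)

lemma fin_eq_sym: "fin_eq f g \<Longrightarrow> fin_eq g f"
  unfolding fin_eq_def by (simp add: eq_commute)

lemma fin_eq_trans: "fin_eq f g \<Longrightarrow> fin_eq g h \<Longrightarrow> fin_eq f h"
  unfolding fin_eq_def
  by (rule finite_subset[of _ "{x \<in> Xint. f x \<noteq> g x} \<union> {x \<in> Xint. g x \<noteq> h x}"]) auto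

lemma fin_eq_if_eq_on_Xint:
  assumes "\<And>x. x \<in> Xint \<Longrightarrow> f x = g x"
  shows "fin_eq f g"
  unfolding fin_eq_def by (rule finite_subset[of _ "{}"]) (use assms in auto)

lemma fin_eq_comp:
  assumes "fin_eq f f'" "fin_eq k k'" "bij_betw k' Xint Xint"
  shows "fin_eq (f \<circ> k) (f' \<circ> k')"
proof -
  have "{x \<in> Xint. (f \<circ> k) x \<noteq> (f' \<circ> k') x} \<subseteq>
      {x \<in> Xint. k x \<noteq> k' x} \<union> (k' -` {y \<in> Xint. f y \<noteq> f' y} \<inter> Xint)"
    using bij_betwE[OF assms(3)] by auto
  moreover have "finite (k' -` {y \<in> Xint. f y \<noteq> f' y} \<inter> Xint)"
    using assms by (intro finite_vimage_IntI) (auto simp: fin_eq_def bij_betw_def)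
  ultimately show ?thesis
    using assms(2) unfolding fin_eq_def by (meson finite_UnI finite_subset)
qed

lemma invX_f: "bij_betw f Xint Xint \<Longrightarrow> x \<in> Xint \<Longrightarrow> invX f (f x) = x"
  unfolding invX_def by (simp add: bij_betw_def the_inv_into_f_f)

lemma f_invX: "bij_betw f Xint Xint \<Longrightarrow> y \<in> Xint \<Longrightarrow> f (invX f y) = y"
  unfolding invX_def by (simp add: bij_betw_def f_the_inv_into_f)

lemma bij_betw_invX: "bij_betw f Xint Xint \<Longrightarrow> bij_betw (invX f) Xint Xint"
  unfolding invX_def by (rule bij_betw_the_inv_into)

lemma invX_in_Xint: "bij_betw f Xint Xint \<Longrightarrow> y \<in> Xint \<Longrightarrow> invX f y \<in> Xint"
  using bij_betw_invX bij_betwE by blast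

lemma invX_comp:
  assumes "bij_betw f Xint Xint" "bij_betw k Xint Xint" "y \<in> Xint"
  shows "invX (f \<circ> k) y = invX k (invX f y)"
proof -
  have "(f \<circ> k) (invX k (invX f y)) = y"
    using assms by (simp add: f_invX invX_in_Xint)
  then show ?thesis
    using assms invX_f[OF bij_betw_trans[OF assms(2,1)]] invX_in_Xint by metis
qed

lemma fin_eq_invX:
  assumes "bij_betw f Xint Xint" "bij_betw f' Xint Xint" "fin_eq f f'"
  shows "fin_eq (invX f) (invX f')"
proof -
  have "{y \<in> Xint. invX f y \<noteq> invX f' y} \<subseteq> f ` {x \<in> Xint. f x \<noteq> f' x}"
  proof
    fix y assume "y \<in> {y \<in> Xint. invX f y \<noteq> invX f' y}"
    then have y: "y \<in> Xint" "invX f y \<noteq> invX f' y"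
      by auto
    define x where "x = invX f y"
    have x: "x \<in> Xint" "f x = y"
      using assms(1) y(1) by (simp_all add: x_def invX_in_Xint f_invX)
    have "f' x \<noteq> f x"
    proof
      assume "f' x = f x"
      then have "invX f' y = x"
        using invX_f[OF assms(2) x(1)] x(2) by simp
      then show False
        using y(2) by (simp add: x_def)
    qed
    with x show "y \<in> f ` {x \<in> Xint. f x \<noteq> f' x}"
      by auto
  qed
  then show ?thesis
    using assms(3) unfolding fin_eq_def by (meson finite_imageI finite_subset)
qed

lemma piecewise_incr_fin_eq:
  assumes "piecewise_incr S f'" "fin_eq f f'"
  shows "piecewise_incr (S \<union> {x \<in> Xint. f x \<noteq> f' x}) f"
proof -
  have "continuous_on {a<..<b} f \<and> strict_mono_on {a<..<b} f"
    if ab: "0 \<le> a" "b \<le> 1" "{a<..<b} \<inter> (S \<union> {x \<in> Xint. f x \<noteq> f' x}) = {}" for a b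
  proof
    have eq: "f x = f' x" if "x \<in> {a<..<b}" for x
    proof -
      have "x \<in> Xint"
        using that Ioo_subset_Xint[OF ab(1,2)] by blast
      with that ab(3) show ?thesis
        by blast
    qed
    have "{a<..<b} \<inter> S = {}"
      using ab(3) by blast
    note f' = piecewise_incrD[OF assms(1) ab(1,2) this]
    have "continuous_on {a<..<b} f = continuous_on {a<..<b} f'"
      by (rule continuous_on_cong) (simp_all add: eq)
    with f'(1) show "continuous_on {a<..<b} f"
      by simp
    show "strict_mono_on {a<..<b} f"
      using f'(2) eq by (simp add: monotone_on_def)
  qed
  moreover have "finite (S \<union> {x \<in> Xint. f x \<noteq> f' x})"
    using assms by (simp add: piecewise_incr_def fin_eq_def)
  ultimately show ?thesis
    unfolding piecewise_incr_def by blast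
qed

lemma PCplus_hat_if_in_PCplus:
  assumes "in_PCplus f" "bij_betw f Xint Xint"
  shows "f \<in> PCplus_hat"
proof -
  obtain h S where "fin_eq f h" "piecewise_incr S h"
    using assms(1) by (auto simp: in_PCplus_def PCplus_hat_iff)
  then show ?thesis
    using assms(2) piecewise_incr_fin_eq PCplus_hat_iff by blast
qed

lemma in_PCplus_fin_eq: "fin_eq f f' \<Longrightarrow> in_PCplus f' \<Longrightarrow> in_PCplus f"
  unfolding in_PCplus_def using fin_eq_trans by blast

lemma in_PCplus_if_PCplus_hat: "f \<in> PCplus_hat \<Longrightarrow> in_PCplus f"
  unfolding in_PCplus_def using fin_eq_refl by blast

lemma continuous_inj_on_Ioo_strict_mono_or_antimono:
  fixes f :: "real \<Rightarrow> real"
  assumes cont: "continuous_on {a<..<b} f" and inj: "inj_on f {a<..<b}"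
  shows "strict_mono_on {a<..<b} f \<or> strict_antimono_on {a<..<b} f"
proof (rule ccontr)
  assume "\<not> ?thesis"
  then obtain p q r s where pq: "p \<in> {a<..<b}" "q \<in> {a<..<b}" "p < q" "f q \<le> f p"
    and rs: "r \<in> {a<..<b}" "s \<in> {a<..<b}" "r < s" "f r \<le> f s"
    unfolding monotone_on_def by (auto simp: not_less)
  \<comment> \<open>Slide the pair \<open>p < q\<close> to the pair \<open>r < s\<close>; the difference of the values changes sign.\<close>
  define u where "u t = (1 - t) * p + t * r" for t
  define v where "v t = (1 - t) * q + t * s" for t
  have uv: "u t \<in> {a<..<b}" "v t \<in> {a<..<b}" "u t < v t" if "t \<in> {0..1}" for t
  proof -
    show "u t \<in> {a<..<b}" "v t \<in> {a<..<b}"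
      using convexD_alt[of "{a<..<b}"] pq rs that by (auto simp: u_def v_def)
    have "(1 - t) * p \<le> (1 - t) * q" "t * r \<le> t * s"
      using that pq rs by (auto intro: mult_left_mono)
    moreover have "(1 - t) * p < (1 - t) * q \<or> t * r < t * s"
      using that pq rs by (cases "t = 1") auto
    ultimately show "u t < v t"
      unfolding u_def v_def by linarith
  qed
  have "continuous_on {0..1} (\<lambda>t. f (v t) - f (u t))"
    using uv(1,2) unfolding u_def v_def
    by (intro continuous_intros continuous_on_compose2[OF cont]) auto
  moreover have "f (v 0) - f (u 0) \<le> 0" "0 \<le> f (v 1) - f (u 1)"
    using pq rs by (auto simp: u_def v_def)
  ultimately obtain t where "t \<in> {0..1}" "f (v t) = f (u t)"
    using IVT'[of "\<lambda>t. f (v t) - f (u t)" 0 0 1] by auto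
  then have "v t = u t"
    using uv(1,2) inj_onD[OF inj] by blast
  with uv(3)[OF \<open>t \<in> {0..1}\<close>] show False
    by simp
qed

lemma at_within_Xint: "x \<in> {0<..<1} \<Longrightarrow> at x within Xint = at x"
  by (rule at_within_open_subset[of x "{0<..<1}"]) (auto simp: Xint_def)

lemma PCbowtie_hat_piecewise_monotone:
  assumes "g \<in> PCbowtie_hat"
  obtains F where "finite F"
    "\<And>a b. 0 \<le> a \<Longrightarrow> b \<le> 1 \<Longrightarrow> {a<..<b} \<inter> F = {} \<Longrightarrow>
       continuous_on {a<..<b} g \<and> (strict_mono_on {a<..<b} g \<or> strict_antimono_on {a<..<b} g)"
proof -
  obtain F where bij: "bij_betw g Xint Xint" and F: "finite F"
    and cont: "\<forall>x \<in> Xint - F. continuous (at x within Xint) g"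
    using assms unfolding PCbowtie_hat_def by blast
  have "continuous_on {a<..<b} g \<and> (strict_mono_on {a<..<b} g \<or> strict_antimono_on {a<..<b} g)"
    if ab: "0 \<le> a" "b \<le> 1" "{a<..<b} \<inter> F = {}" for a b
  proof -
    have "isCont g x" if "x \<in> {a<..<b}" for x
    proof -
      have "x \<in> Xint - F" "x \<in> {0<..<1}"
        using that ab by (auto simp: Xint_def)
      then show ?thesis
        using cont at_within_Xint by metis
    qed
    then have "continuous_on {a<..<b} g"
      by (simp add: continuous_at_imp_continuous_on)
    moreover have "inj_on g {a<..<b}"
      using bij Ioo_subset_Xint[OF ab(1,2)] inj_on_subset unfolding bij_betw_def by blast
    ultimately show ?thesis
      using continuous_inj_on_Ioo_strict_mono_or_antimono by blast
  qed
  with F that show ?thesis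
    by blast
qed

lemma piecewise_incr_on_image_Ioo:
  fixes g :: "real \<Rightarrow> real"
  assumes k: "piecewise_incr S k"
    and g: "continuous_on {a<..<b} g" "g ` {a<..<b} \<subseteq> Xint"
    and avoid: "{a<..<b} \<inter> g -` S = {}"
    and xy: "a < x" "x \<le> y" "y < b"
  shows "continuous_on {g x<..<g y} k" "strict_mono_on {g x<..<g y} k"
proof -
  have "continuous_on {x..y} g"
    using xy by (intro continuous_on_subset[OF g(1)]) auto
  then have "connected (g ` {x..y})"
    by (simp add: connected_continuous_image)
  then have "{g x<..<g y} \<subseteq> g ` {x..y}"
    using xy by (intro connected_contains_Ioo) auto
  moreover have "{x..y} \<subseteq> {a<..<b}"
    using xy by auto
  ultimately have "{g x<..<g y} \<inter> S = {}"
    using avoid by blast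
  moreover have "g x \<in> Xint" "g y \<in> Xint"
    using g(2) xy by (auto simp: image_subset_iff)
  then have "0 \<le> g x" "g y \<le> 1"
    by (auto simp: Xint_def)
  ultimately show "continuous_on {g x<..<g y} k" "strict_mono_on {g x<..<g y} k"
    using piecewise_incrD[OF k] by blast+
qed

lemma strict_mono_on_comp_piecewise_incr:
  fixes g :: "real \<Rightarrow> real"
  assumes k: "piecewise_incr S k"
    and g: "continuous_on {a<..<b} g" "strict_mono_on {a<..<b} g" "g ` {a<..<b} \<subseteq> Xint"
    and avoid: "{a<..<b} \<inter> g -` S = {}"
  shows "continuous_on {a<..<b} (k \<circ> g) \<and> strict_mono_on {a<..<b} (k \<circ> g)"
proof -
  have around: "\<exists>c d. c < g x \<and> g y < d \<and> continuous_on {c<..<d} k \<and> strict_mono_on {c<..<d} k"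
    if "x \<in> {a<..<b}" "y \<in> {a<..<b}" "x \<le> y" for x y
  proof (intro exI conjI)
    let ?x' = "(a + x) / 2" and ?y' = "(y + b) / 2"
    show "g ?x' < g x" "g y < g ?y'"
      using that by (auto intro!: monotone_onD[OF g(2)])
    show "continuous_on {g ?x'<..<g ?y'} k" "strict_mono_on {g ?x'<..<g ?y'} k"
      using piecewise_incr_on_image_Ioo[OF k g(1,3) avoid, of ?x' ?y'] that by auto
  qed
  have cont: "isCont (k \<circ> g) x" if x: "x \<in> {a<..<b}" for x
  proof (rule continuous_at_compose)
    show "isCont g x"
      using g(1) x by (simp add: continuous_on_eq_continuous_at)
    obtain c d where "c < g x" "g x < d" "continuous_on {c<..<d} k"
      using around[OF x x] by auto
    then show "isCont k (g x)"
      by (simp add: continuous_on_eq_continuous_at)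
  qed
  have mono: "(k \<circ> g) x < (k \<circ> g) y" if xy: "x \<in> {a<..<b}" "y \<in> {a<..<b}" "x < y" for x y
  proof -
    obtain c d where cd: "c < g x" "g y < d" and k_mono: "strict_mono_on {c<..<d} k"
      using around[OF xy(1,2)] xy(3) by auto
    have "g x < g y"
      using monotone_onD[OF g(2) xy] .
    with cd show ?thesis
      by (auto intro: monotone_onD[OF k_mono])
  qed
  show ?thesis
  proof
    show "continuous_on {a<..<b} (k \<circ> g)"
      using cont by (blast intro: continuous_at_imp_continuous_on)
    show "strict_mono_on {a<..<b} (k \<circ> g)"
      using mono by (blast intro: monotone_onI)
  qed
qed

lemma piecewise_incr_comp:
  assumes f: "piecewise_incr S f" and k: "piecewise_incr T k" "bij_betw k Xint Xint"
  shows "piecewise_incr (T \<union> (k -` S \<inter> Xint)) (f \<circ> k)"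
proof -
  have "continuous_on {a<..<b} (f \<circ> k) \<and> strict_mono_on {a<..<b} (f \<circ> k)"
    if ab: "0 \<le> a" "b \<le> 1" "{a<..<b} \<inter> (T \<union> (k -` S \<inter> Xint)) = {}" for a b
  proof (rule strict_mono_on_comp_piecewise_incr[OF f])
    have "{a<..<b} \<inter> T = {}"
      using ab(3) by blast
    then show "continuous_on {a<..<b} k" "strict_mono_on {a<..<b} k"
      using piecewise_incrD[OF k(1) ab(1,2)] by blast+
    show "k ` {a<..<b} \<subseteq> Xint" "{a<..<b} \<inter> k -` S = {}"
      using bij_betwE[OF k(2)] Ioo_subset_Xint[OF ab(1,2)] ab(3) by blast+
  qed
  moreover have "finite (T \<union> (k -` S \<inter> Xint))"
    using f k by (auto simp: piecewise_incr_def bij_betw_def intro: finite_vimage_IntI)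
  ultimately show ?thesis
    by (simp add: piecewise_incr_def)
qed

lemma piecewise_incr_nbhd:
  assumes k: "piecewise_incr S k" and x: "x \<in> {0<..<1}" "x \<notin> S"
  obtains e where "e > 0" "{x - e<..<x + e} \<subseteq> Xint"
    "continuous_on {x - e<..<x + e} k" "strict_mono_on {x - e<..<x + e} k"
proof -
  have "open ({0<..<1} - S)"
    using k by (auto simp: piecewise_incr_def intro: open_Diff finite_imp_closed)
  with x obtain e where e: "e > 0" "cball x e \<subseteq> {0<..<1} - S"
    using open_contains_cball by blast
  then have near: "0 < t \<and> t < 1 \<and> t \<notin> S" if "x - e \<le> t" "t \<le> x + e" for t
    using that by (auto simp: cball_eq_atLeastAtMost subset_iff)
  have "t \<notin> S" if "t \<in> {x - e<..<x + e}" for t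
    using near[of t] that by simp
  then have "{x - e<..<x + e} \<inter> S = {}"
    by blast
  moreover have "0 \<le> x - e" "x + e \<le> 1"
    using near[of "x - e"] near[of "x + e"] e(1) by auto
  ultimately show ?thesis
    by (intro that[OF e(1)] Ioo_subset_Xint piecewise_incrD[OF k])
qed

lemma invX_locally_strict_mono:
  assumes bij: "bij_betw k Xint Xint" and e: "e > 0" "{x - e<..<x + e} \<subseteq> Xint"
    "continuous_on {x - e<..<x + e} k" "strict_mono_on {x - e<..<x + e} k"
  shows "isCont (invX k) (k x)" "\<exists>\<delta>>0. strict_mono_on ({k x - \<delta><..<k x + \<delta>} \<inter> Xint) (invX k)"
proof -
  show cont: "isCont (invX k) (k x)"
  proof (rule isCont_inverse_function[where f = k and x = x and d = "e / 2"])
    fix z assume "\<bar>z - x\<bar> \<le> e / 2"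
    then have z: "z \<in> {x - e<..<x + e}"
      using e(1) abs_le_D1 abs_le_D2 by fastforce
    then show "invX k (k z) = z"
      using e(2) invX_f[OF bij] by blast
    show "isCont k z"
      using e(3) z by (simp add: continuous_on_eq_continuous_at)
  qed (use e in auto)
  obtain \<delta> where \<delta>: "\<delta> > 0" "\<forall>w. dist w (k x) < \<delta> \<longrightarrow> dist (invX k w) (invX k (k x)) < e"
    using cont e(1) unfolding continuous_at_eps_delta by blast
  have "x \<in> Xint"
    using e(1,2) by auto
  then have "invX k (k x) = x"
    by (rule invX_f[OF bij])
  then have near: "invX k w \<in> {x - e<..<x + e}" if "w \<in> {k x - \<delta><..<k x + \<delta>}" for w
    using \<delta>(2)[rule_format, of w] that by (auto simp: dist_real_def abs_less_iff)
  have "strict_mono_on ({k x - \<delta><..<k x + \<delta>} \<inter> Xint) (invX k)"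
  proof (rule monotone_onI)
    fix w1 w2 assume w: "w1 \<in> {k x - \<delta><..<k x + \<delta>} \<inter> Xint" "w2 \<in> {k x - \<delta><..<k x + \<delta>} \<inter> Xint"
      "w1 < w2"
    then have "k (invX k w1) < k (invX k w2)"
      using f_invX[OF bij] by simp
    with w show "invX k w1 < invX k w2"
      using strict_mono_on_less[OF e(4) near[of w1] near[of w2]] by blast
  qed
  with \<delta>(1) show "\<exists>\<delta>>0. strict_mono_on ({k x - \<delta><..<k x + \<delta>} \<inter> Xint) (invX k)"
    by blast
qed

lemma strict_mono_on_Ioo_if_locally:
  fixes h :: "real \<Rightarrow> real"
  assumes "continuous_on {c<..<d} h" "inj_on h {c<..<d}" "y \<in> {c<..<d}" "\<delta> > 0"
    and local: "strict_mono_on ({y - \<delta><..<y + \<delta>} \<inter> {c<..<d}) h"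
  shows "strict_mono_on {c<..<d} h"
proof -
  define \<eta> where "\<eta> = min \<delta> (d - y)"
  have "0 < \<eta>" "\<eta> \<le> \<delta>" "\<eta> \<le> d - y"
    using assms(3,4) by (auto simp: \<eta>_def)
  then have "y + \<eta> / 2 \<in> {y - \<delta><..<y + \<delta>} \<inter> {c<..<d}" "y \<in> {y - \<delta><..<y + \<delta>} \<inter> {c<..<d}"
    using assms(3,4) by auto
  then have "h y < h (y + \<eta> / 2)"
    using monotone_onD[OF local] \<open>0 < \<eta>\<close> by simp
  then have "\<not> strict_antimono_on {c<..<d} h"
    using monotone_onD[of "{c<..<d}" "(<)" "(>)" h y "y + \<eta> / 2"] \<open>0 < \<eta>\<close>
      \<open>y + \<eta> / 2 \<in> _\<close> assms(3) by force
  with continuous_inj_on_Ioo_strict_mono_or_antimono[OF assms(1,2)] show ?thesis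
    by blast
qed

lemma piecewise_incr_invX_locally:
  assumes k: "piecewise_incr S k" and bij: "bij_betw k Xint Xint"
    and y: "y \<in> Xint" "y \<notin> k ` (insert 0 S \<inter> Xint)"
  shows "isCont (invX k) y" "\<exists>\<delta>>0. strict_mono_on ({y - \<delta><..<y + \<delta>} \<inter> Xint) (invX k)"
proof -
  define x where "x = invX k y"
  have "x \<in> Xint" "k x = y"
    using bij y(1) by (auto simp: x_def invX_in_Xint f_invX)
  with y(2) have "x \<in> {0<..<1}" "x \<notin> S"
    by (auto simp: Xint_def)
  then obtain e where "e > 0" "{x - e<..<x + e} \<subseteq> Xint"
    "continuous_on {x - e<..<x + e} k" "strict_mono_on {x - e<..<x + e} k"
    by (rule piecewise_incr_nbhd[OF k])
  from invX_locally_strict_mono[OF bij this] \<open>k x = y\<close>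
  show "isCont (invX k) y" "\<exists>\<delta>>0. strict_mono_on ({y - \<delta><..<y + \<delta>} \<inter> Xint) (invX k)"
    by simp_all
qed

lemma piecewise_incr_invX:
  assumes k: "piecewise_incr S k" and bij: "bij_betw k Xint Xint"
  shows "piecewise_incr (k ` (insert 0 S \<inter> Xint)) (invX k)"
proof -
  have "continuous_on {c<..<d} (invX k) \<and> strict_mono_on {c<..<d} (invX k)"
    if cd: "0 \<le> c" "d \<le> 1" "{c<..<d} \<inter> k ` (insert 0 S \<inter> Xint) = {}" for c d
  proof
    have sub: "{c<..<d} \<subseteq> Xint"
      using Ioo_subset_Xint cd by blast
    have off: "y \<in> Xint" "y \<notin> k ` (insert 0 S \<inter> Xint)" if "y \<in> {c<..<d}" for y
      using that sub cd(3) by blast+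
    have "isCont (invX k) y" if "y \<in> {c<..<d}" for y
      using piecewise_incr_invX_locally(1)[OF k bij off[OF that]] .
    then show cont: "continuous_on {c<..<d} (invX k)"
      by (simp add: continuous_at_imp_continuous_on)
    show "strict_mono_on {c<..<d} (invX k)"
    proof (cases "c < d")
      case True
      then have y: "(c + d) / 2 \<in> {c<..<d}"
        by simp
      then obtain \<delta> where "\<delta> > 0"
        and mono: "strict_mono_on ({(c + d) / 2 - \<delta><..<(c + d) / 2 + \<delta>} \<inter> Xint) (invX k)"
        using piecewise_incr_invX_locally(2)[OF k bij off[OF y]] by blast
      have "inj_on (invX k) {c<..<d}"
        using bij_betw_invX[OF bij] sub inj_on_subset unfolding bij_betw_def by blast
      moreover have "strict_mono_on ({(c + d) / 2 - \<delta><..<(c + d) / 2 + \<delta>} \<inter> {c<..<d}) (invX k)"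
        using monotone_on_subset[OF mono] sub by blast
      ultimately show ?thesis
        using strict_mono_on_Ioo_if_locally[OF cont _ y \<open>\<delta> > 0\<close>] by blast
    qed (simp add: monotone_on_def)
  qed
  moreover have "finite (k ` (insert 0 S \<inter> Xint))"
    using k by (simp add: piecewise_incr_def)
  ultimately show ?thesis
    by (simp add: piecewise_incr_def)
qed

lemma PCplus_hat_comp:
  assumes "f \<in> PCplus_hat" "k \<in> PCplus_hat"
  shows "f \<circ> k \<in> PCplus_hat"
proof -
  obtain S T where "piecewise_incr S f" "piecewise_incr T k"
    and "bij_betw f Xint Xint" "bij_betw k Xint Xint"
    using assms by (auto simp: PCplus_hat_iff)
  then show ?thesis
    unfolding PCplus_hat_iff by (blast intro: piecewise_incr_comp bij_betw_trans)
qed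

lemma PCplus_hat_invX:
  assumes "k \<in> PCplus_hat"
  shows "invX k \<in> PCplus_hat"
proof -
  obtain S where "piecewise_incr S k" "bij_betw k Xint Xint"
    using assms by (auto simp: PCplus_hat_iff)
  then show ?thesis
    unfolding PCplus_hat_iff by (blast intro: piecewise_incr_invX bij_betw_invX)
qed

(* x \<mapsto> 1 - x sends 0 to 1 \<notin> X; fixing 0 instead gives a bijection of X in the class R. *)
definition reflX :: "real \<Rightarrow> real" where
  "reflX x = (if x = 0 then 0 else 1 - x)"

lemma reflX_in_Xint: "x \<in> Xint \<Longrightarrow> reflX x \<in> Xint"
  by (auto simp: reflX_def Xint_def)

lemma reflX_reflX: "x \<in> Xint \<Longrightarrow> reflX (reflX x) = x"
  by (auto simp: reflX_def Xint_def)

lemma bij_betw_reflX: "bij_betw reflX Xint Xint"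
  by (rule bij_betwI[of reflX Xint Xint reflX]) (auto simp: reflX_in_Xint reflX_reflX)

lemma invX_reflX: "y \<in> Xint \<Longrightarrow> invX reflX y = reflX y"
  using invX_f[OF bij_betw_reflX reflX_in_Xint, of y] by (simp add: reflX_reflX)

lemma fin_eq_reflX_comp:
  assumes "inj_on f Xint"
  shows "fin_eq (reflX \<circ> f) (\<lambda>x. 1 - f x)"
proof -
  have "{x \<in> Xint. (reflX \<circ> f) x \<noteq> 1 - f x} \<subseteq> f -` {0} \<inter> Xint"
    by (auto simp: reflX_def)
  moreover have "finite (f -` {0} \<inter> Xint)"
    using assms by (intro finite_vimage_IntI) auto
  ultimately show ?thesis
    unfolding fin_eq_def by (rule finite_subset)
qed

lemma fin_eq_reflX: "fin_eq reflX (\<lambda>x. 1 - x)"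
  using fin_eq_reflX_comp[of id] by simp

lemma reflX_PCbowtie_hat: "reflX \<in> PCbowtie_hat"
proof -
  have "continuous_on {0<..<1} reflX = continuous_on {0<..<1} (\<lambda>x::real. 1 - x)"
    by (rule continuous_on_cong) (auto simp: reflX_def)
  moreover have "continuous_on {0<..<1} (\<lambda>x::real. 1 - x)"
    by (intro continuous_intros)
  ultimately have cont: "continuous_on {0<..<1} reflX"
    by simp
  have "continuous (at x within Xint) reflX" if "x \<in> Xint - {0}" for x
  proof -
    have "x \<in> {0<..<1}"
      using that by (auto simp: Xint_def)
    with cont have "isCont reflX x"
      by (simp add: continuous_on_eq_continuous_at)
    then show ?thesis
      by (rule continuous_at_imp_continuous_at_within)
  qed
  with bij_betw_reflX show ?thesis
    unfolding PCbowtie_hat_def by (intro CollectI conjI exI[of _ "{0}"]) auto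
qed

lemma piecewise_incr_reflect:
  assumes m: "piecewise_incr S m"
  shows "piecewise_incr ((\<lambda>s. 1 - s) ` S) (\<lambda>x. 1 - m (1 - x))"
proof -
  have "continuous_on {a<..<b} (\<lambda>x. 1 - m (1 - x)) \<and> strict_mono_on {a<..<b} (\<lambda>x. 1 - m (1 - x))"
    if ab: "0 \<le> a" "b \<le> 1" "{a<..<b} \<inter> (\<lambda>s. 1 - s) ` S = {}" for a b
  proof
    have "s \<notin> {1 - b<..<1 - a}" if "s \<in> S" for s
      using that ab(3) by force
    then have "{1 - b<..<1 - a} \<inter> S = {}"
      by blast
    moreover have "0 \<le> 1 - b" "1 - a \<le> 1"
      using ab by auto
    ultimately have cont: "continuous_on {1 - b<..<1 - a} m" and mono: "strict_mono_on {1 - b<..<1 - a} m"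
      using piecewise_incrD[OF m] by blast+
    have "continuous_on {a<..<b} (\<lambda>x. m (1 - x))"
      by (rule continuous_on_compose2[OF cont]) (auto intro!: continuous_intros)
    then show "continuous_on {a<..<b} (\<lambda>x. 1 - m (1 - x))"
      by (intro continuous_intros)
    show "strict_mono_on {a<..<b} (\<lambda>x. 1 - m (1 - x))"
      using mono by (auto simp: monotone_on_def)
  qed
  moreover have "finite ((\<lambda>s. 1 - s) ` S)"
    using m by (simp add: piecewise_incr_def)
  ultimately show ?thesis
    unfolding piecewise_incr_def by blast
qed

lemma PCplus_hat_conj_reflX:
  assumes "m \<in> PCplus_hat"
  shows "reflX \<circ> m \<circ> reflX \<in> PCplus_hat"
proof -
  obtain S where S: "piecewise_incr S m" and m: "bij_betw m Xint Xint"
    using assms by (auto simp: PCplus_hat_iff)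
  have "{x \<in> Xint. (reflX \<circ> m \<circ> reflX) x \<noteq> 1 - m (1 - x)} \<subseteq> {0, 1 - invX m 0}"
  proof
    fix x assume "x \<in> {x \<in> Xint. (reflX \<circ> m \<circ> reflX) x \<noteq> 1 - m (1 - x)}"
    then have x: "x \<in> Xint" "reflX (m (reflX x)) \<noteq> 1 - m (1 - x)"
      by auto
    show "x \<in> {0, 1 - invX m 0}"
    proof (cases "x = 0")
      case False
      then have "reflX x = 1 - x" "1 - x \<in> Xint"
        using x(1) by (auto simp: reflX_def Xint_def)
      with x(2) have "m (1 - x) = 0"
        by (auto simp: reflX_def split: if_splits)
      with \<open>1 - x \<in> Xint\<close> have "invX m 0 = 1 - x"
        using invX_f[OF m] by metis
      then show ?thesis
        by simp
    qed simp
  qed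
  then have "fin_eq (reflX \<circ> m \<circ> reflX) (\<lambda>x. 1 - m (1 - x))"
    unfolding fin_eq_def by (rule finite_subset) simp
  then have "\<exists>T. piecewise_incr T (reflX \<circ> m \<circ> reflX)"
    using piecewise_incr_fin_eq[OF piecewise_incr_reflect[OF S]] by blast
  moreover have "bij_betw (reflX \<circ> m \<circ> reflX) Xint Xint"
    using bij_betw_trans[OF bij_betw_trans[OF bij_betw_reflX m] bij_betw_reflX]
    by (simp add: comp_assoc)
  ultimately show ?thesis
    unfolding PCplus_hat_iff by blast
qed

lemma bij_betw_conj:
  assumes "bij_betw g Xint Xint" "bij_betw h Xint Xint"
  shows "bij_betw (g \<circ> h \<circ> invX g) Xint Xint" "bij_betw (invX g \<circ> h \<circ> g) Xint Xint"
  using bij_betw_trans[OF bij_betw_invX[OF assms(1)] bij_betw_trans[OF assms(2,1)]]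
    bij_betw_trans[OF bij_betw_trans[OF assms(1,2)] bij_betw_invX[OF assms(1)]]
  by (simp_all add: comp_assoc)

lemma normalizes_PCplus_if_PCplus_hat:
  assumes "g \<in> PCplus_hat"
  shows "normalizes_PCplus g"
  unfolding normalizes_PCplus_def
  using assms by (simp add: in_PCplus_if_PCplus_hat PCplus_hat_comp PCplus_hat_invX)

lemma normalizes_PCplus_reflX: "normalizes_PCplus reflX"
  unfolding normalizes_PCplus_def
proof (intro ballI conjI)
  fix h assume h: "h \<in> PCplus_hat"
  then have "h x \<in> Xint" if "x \<in> Xint" for x
    using that by (auto simp: PCplus_hat_iff dest: bij_betwE)
  then have "fin_eq (reflX \<circ> h \<circ> invX reflX) (reflX \<circ> h \<circ> reflX)"
    and "fin_eq (invX reflX \<circ> h \<circ> reflX) (reflX \<circ> h \<circ> reflX)"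
    by (auto intro!: fin_eq_if_eq_on_Xint simp: invX_reflX reflX_in_Xint)
  with PCplus_hat_conj_reflX[OF h]
  show "in_PCplus (reflX \<circ> h \<circ> invX reflX)" "in_PCplus (invX reflX \<circ> h \<circ> reflX)"
    unfolding in_PCplus_def by blast+
qed

lemma normalizes_PCplus_comp:
  assumes g1: "bij_betw g1 Xint Xint" "normalizes_PCplus g1"
    and g2: "bij_betw g2 Xint Xint" "normalizes_PCplus g2"
  shows "normalizes_PCplus (g1 \<circ> g2)"
  unfolding normalizes_PCplus_def
proof (intro ballI conjI)
  fix h assume h: "h \<in> PCplus_hat"
  then have hb: "bij_betw h Xint Xint"
    by (simp add: PCplus_hat_iff)
  have "g2 \<circ> h \<circ> invX g2 \<in> PCplus_hat"
    using g2 h bij_betw_conj[OF g2(1) hb]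
    by (intro PCplus_hat_if_in_PCplus) (auto simp: normalizes_PCplus_def)
  then have "in_PCplus (g1 \<circ> (g2 \<circ> h \<circ> invX g2) \<circ> invX g1)"
    using g1(2) by (simp add: normalizes_PCplus_def)
  moreover have "fin_eq (g1 \<circ> g2 \<circ> h \<circ> invX (g1 \<circ> g2)) (g1 \<circ> (g2 \<circ> h \<circ> invX g2) \<circ> invX g1)"
    by (rule fin_eq_if_eq_on_Xint) (simp add: invX_comp[OF g1(1) g2(1)])
  ultimately show "in_PCplus (g1 \<circ> g2 \<circ> h \<circ> invX (g1 \<circ> g2))"
    by (rule in_PCplus_fin_eq[rotated])
  have "invX g1 \<circ> h \<circ> g1 \<in> PCplus_hat"
    using g1 h bij_betw_conj[OF g1(1) hb]
    by (intro PCplus_hat_if_in_PCplus) (auto simp: normalizes_PCplus_def)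
  then have "in_PCplus (invX g2 \<circ> (invX g1 \<circ> h \<circ> g1) \<circ> g2)"
    using g2(2) by (simp add: normalizes_PCplus_def)
  moreover have "fin_eq (invX (g1 \<circ> g2) \<circ> h \<circ> (g1 \<circ> g2)) (invX g2 \<circ> (invX g1 \<circ> h \<circ> g1) \<circ> g2)"
  proof (rule fin_eq_if_eq_on_Xint)
    fix x assume "x \<in> Xint"
    then have "h (g1 (g2 x)) \<in> Xint"
      using g1(1) g2(1) hb by (meson bij_betwE)
    then show "(invX (g1 \<circ> g2) \<circ> h \<circ> (g1 \<circ> g2)) x = (invX g2 \<circ> (invX g1 \<circ> h \<circ> g1) \<circ> g2) x"
      by (simp add: invX_comp[OF g1(1) g2(1)])
  qed
  ultimately show "in_PCplus (invX (g1 \<circ> g2) \<circ> h \<circ> (g1 \<circ> g2))"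
    by (rule in_PCplus_fin_eq[rotated])
qed

lemma normalizes_PCplus_fin_eq:
  assumes g: "bij_betw g Xint Xint" and g': "bij_betw g' Xint Xint"
    and "fin_eq g g'" "normalizes_PCplus g'"
  shows "normalizes_PCplus g"
  unfolding normalizes_PCplus_def
proof (intro ballI conjI)
  fix h assume h: "h \<in> PCplus_hat"
  then have hb: "bij_betw h Xint Xint"
    by (simp add: PCplus_hat_iff)
  have inv: "fin_eq (invX g) (invX g')"
    by (rule fin_eq_invX[OF g g' \<open>fin_eq g g'\<close>])
  have "fin_eq (g \<circ> h \<circ> invX g) (g' \<circ> h \<circ> invX g')"
    by (intro fin_eq_comp \<open>fin_eq g g'\<close> inv fin_eq_refl hb bij_betw_invX g')
  moreover have "in_PCplus (g' \<circ> h \<circ> invX g')"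
    using \<open>normalizes_PCplus g'\<close> h by (simp add: normalizes_PCplus_def)
  ultimately show "in_PCplus (g \<circ> h \<circ> invX g)"
    by (rule in_PCplus_fin_eq)
  have "fin_eq (invX g \<circ> h \<circ> g) (invX g' \<circ> h \<circ> g')"
    by (intro fin_eq_comp \<open>fin_eq g g'\<close> inv fin_eq_refl hb g')
  moreover have "in_PCplus (invX g' \<circ> h \<circ> g')"
    using \<open>normalizes_PCplus g'\<close> h by (simp add: normalizes_PCplus_def)
  ultimately show "in_PCplus (invX g \<circ> h \<circ> g)"
    by (rule in_PCplus_fin_eq)
qed

lemma normalizes_PCplus_if_in_PCpm:
  assumes g: "bij_betw g Xint Xint" and "in_PCpm g"
  shows "normalizes_PCplus g"
  using \<open>in_PCpm g\<close> unfolding in_PCpm_def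
proof
  assume "in_PCplus g"
  with g show ?thesis
    by (intro normalizes_PCplus_if_PCplus_hat PCplus_hat_if_in_PCplus)
next
  assume "in_PCminus g"
  then obtain r h where r: "fin_eq r (\<lambda>x. 1 - x)" and h: "h \<in> PCplus_hat"
    and g_rh: "fin_eq g (r \<circ> h)"
    unfolding in_PCminus_def by blast
  have hb: "bij_betw h Xint Xint"
    using h by (simp add: PCplus_hat_iff)
  have "fin_eq r reflX"
    using fin_eq_trans[OF r fin_eq_sym[OF fin_eq_reflX]] .
  then have "fin_eq g (reflX \<circ> h)"
    using fin_eq_trans[OF g_rh fin_eq_comp[OF _ fin_eq_refl hb]] by blast
  moreover have "normalizes_PCplus (reflX \<circ> h)"
    by (intro normalizes_PCplus_comp bij_betw_reflX normalizes_PCplus_reflX hb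
        normalizes_PCplus_if_PCplus_hat h)
  ultimately show ?thesis
    using normalizes_PCplus_fin_eq[OF g bij_betw_trans[OF hb bij_betw_reflX]] by blast
qed

lemma finite_avoiding_Ioo:
  fixes a b :: real
  assumes "finite B" "a < b"
  obtains p q where "a \<le> p" "p < q" "q \<le> b" "{p<..<q} \<inter> B = {}"
proof -
  have "infinite ({a<..<b} - B)"
    using assms by (simp add: Diff_infinite_finite)
  then obtain m where m: "m \<in> {a<..<b} - B"
    by (metis finite.emptyI ex_in_conv)
  moreover have "open ({a<..<b} - B)"
    using assms(1) by (intro open_Diff finite_imp_closed) auto
  ultimately obtain e where "e > 0" "ball m e \<subseteq> {a<..<b} - B"
    using open_contains_ball by blast
  then have sub: "{m - e<..<m + e} \<subseteq> {a<..<b}" and disj: "{m - e<..<m + e} \<inter> B = {}"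
    by (auto simp: ball_eq_greaterThanLessThan)
  from sub \<open>e > 0\<close> have "a \<le> m - e" "m + e \<le> b"
    by (simp_all add: greaterThanLessThan_subseteq_greaterThanLessThan)
  with \<open>e > 0\<close> disj show ?thesis
    by (intro that) auto
qed

definition rotX :: "real \<Rightarrow> real \<Rightarrow> real" where
  "rotX c x = frac (x + c)"

lemma rotX_in_Xint: "rotX c x \<in> Xint"
  by (simp add: rotX_def Xint_def frac_lt_1)

lemma rotX_uminus_rotX: "x \<in> Xint \<Longrightarrow> rotX (- c) (rotX c x) = x"
  using frac_add_simps(1)[of "x + c" "- c"] by (simp add: rotX_def Xint_def)

lemma bij_betw_rotX: "bij_betw (rotX c) Xint Xint"
  using rotX_uminus_rotX[of _ "- c"]
  by (intro bij_betwI[of _ _ _ "rotX (- c)"]) (simp_all add: rotX_in_Xint rotX_uminus_rotX)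

lemma finite_Icc_shift_Ints:
  fixes c :: real
  shows "finite {x \<in> {0..1}. x + c \<in> \<int>}"
proof (rule finite_subset)
  show "{x \<in> {0..1}. x + c \<in> \<int>} \<subseteq> (\<lambda>n. of_int n - c) ` {\<lceil>c\<rceil>..\<lfloor>1 + c\<rfloor>}"
  proof
    fix x assume "x \<in> {x \<in> {0..1}. x + c \<in> \<int>}"
    then obtain n where n: "x + c = of_int n" "0 \<le> x" "x \<le> 1"
      by (auto elim!: Ints_cases)
    then have "c \<le> of_int n" "of_int n \<le> 1 + c"
      by linarith+
    then have "n \<in> {\<lceil>c\<rceil>..\<lfloor>1 + c\<rfloor>}"
      unfolding atLeastAtMost_iff ceiling_le_iff le_floor_iff by blast
    moreover have "x = of_int n - c"
      using n(1) by simp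
    ultimately show "x \<in> (\<lambda>n. of_int n - c) ` {\<lceil>c\<rceil>..\<lfloor>1 + c\<rfloor>}"
      by blast
  qed
qed simp

lemma floor_eq_on_Ioo:
  fixes c :: real
  assumes no_int: "\<forall>z\<in>{a<..<b}. z + c \<notin> \<int>" and "x \<in> {a<..<b}" "y \<in> {a<..<b}"
  shows "\<lfloor>x + c\<rfloor> = \<lfloor>y + c\<rfloor>"
proof -
  have floor_le: "\<lfloor>v + c\<rfloor> \<le> \<lfloor>u + c\<rfloor>" if uv: "u \<in> {a<..<b}" "v \<in> {a<..<b}" "u \<le> v" for u v
  proof (rule ccontr)
    assume "\<not> \<lfloor>v + c\<rfloor> \<le> \<lfloor>u + c\<rfloor>"
    then have "real_of_int \<lfloor>u + c\<rfloor> + 1 \<le> of_int \<lfloor>v + c\<rfloor>"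
      by linarith
    define z where "z = of_int \<lfloor>v + c\<rfloor> - c"
    have "u < z"
      using real_of_int_floor_add_one_gt[of "u + c"] \<open>of_int \<lfloor>u + c\<rfloor> + 1 \<le> of_int \<lfloor>v + c\<rfloor>\<close>
      unfolding z_def by linarith
    moreover have "z \<le> v"
      using of_int_floor_le[of "v + c"] unfolding z_def by linarith
    ultimately have "z \<in> {a<..<b}"
      using uv by auto
    moreover have "z + c \<in> \<int>"
      by (simp add: z_def)
    ultimately show False
      using no_int by blast
  qed
  show ?thesis
  proof (cases "x \<le> y")
    case True
    then show ?thesis
      using floor_le[OF assms(2,3) True] floor_mono[of "x + c" "y + c"] by simp
  next
    case False
    then show ?thesis
      using floor_le[OF assms(3,2)] floor_mono[of "y + c" "x + c"] by simp
  qed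
qed

lemma rotX_PCplus_hat: "rotX c \<in> PCplus_hat"
proof -
  define S where "S = {x \<in> {0..1}. x + c \<in> \<int>}"
  have "continuous_on {a<..<b} (rotX c) \<and> strict_mono_on {a<..<b} (rotX c)"
    if ab: "0 \<le> a" "b \<le> 1" "{a<..<b} \<inter> S = {}" for a b
  proof (cases "a < b")
    case True
    have no_int: "\<forall>z\<in>{a<..<b}. z + c \<notin> \<int>"
      using ab by (auto simp: S_def)
    define m where "m = (a + b) / 2"
    have "m \<in> {a<..<b}"
      using True by (simp add: m_def)
    then have rot: "rotX c x = x + c - of_int \<lfloor>m + c\<rfloor>" if "x \<in> {a<..<b}" for x
      using floor_eq_on_Ioo[OF no_int that] by (simp add: rotX_def frac_def)
    have "continuous_on {a<..<b} (rotX c) = continuous_on {a<..<b} (\<lambda>x. x + c - of_int \<lfloor>m + c\<rfloor>)"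
      by (rule continuous_on_cong) (simp_all add: rot)
    moreover have "continuous_on {a<..<b} (\<lambda>x. x + c - of_int \<lfloor>m + c\<rfloor>)"
      by (intro continuous_intros)
    moreover have "strict_mono_on {a<..<b} (rotX c)"
      by (rule monotone_onI) (simp add: rot)
    ultimately show ?thesis
      by simp
  qed (simp add: monotone_on_def)
  moreover have "finite S"
    unfolding S_def by (rule finite_Icc_shift_Ints)
  ultimately have "piecewise_incr S (rotX c)"
    unfolding piecewise_incr_def by blast
  with bij_betw_rotX show ?thesis
    unfolding PCplus_hat_iff by blast
qed

lemma in_PCplus_comp_strict_mono_on_subinterval:
  assumes h: "in_PCplus h" and g: "bij_betw g Xint Xint"
    and ab: "0 \<le> a" "a < b" "b \<le> 1" "continuous_on {a<..<b} g" "strict_mono_on {a<..<b} g"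
  obtains p q where "a \<le> p" "p < q" "q \<le> b" "strict_mono_on {p<..<q} (h \<circ> g)"
proof -
  obtain k S where k: "fin_eq h k" "piecewise_incr S k"
    using h by (auto simp: in_PCplus_def PCplus_hat_iff)
  define E where "E = {y \<in> Xint. h y \<noteq> k y}"
  have "finite (g -` (E \<union> S) \<inter> Xint)"
    using k g unfolding E_def fin_eq_def piecewise_incr_def bij_betw_def
    by (intro finite_vimage_IntI) auto
  then obtain p q where pq: "a \<le> p" "p < q" "q \<le> b"
    and avoid: "{p<..<q} \<inter> (g -` (E \<union> S) \<inter> Xint) = {}"
    using ab(2) by (rule finite_avoiding_Ioo)
  have sub: "{p<..<q} \<subseteq> {a<..<b}" and subX: "{p<..<q} \<subseteq> Xint"
    using pq ab by (auto simp: Xint_def)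
  have "continuous_on {p<..<q} (k \<circ> g) \<and> strict_mono_on {p<..<q} (k \<circ> g)"
  proof (rule strict_mono_on_comp_piecewise_incr[OF k(2)])
    show "continuous_on {p<..<q} g" "strict_mono_on {p<..<q} g"
      using continuous_on_subset[OF ab(4) sub] monotone_on_subset[OF ab(5) sub] .
    show "g ` {p<..<q} \<subseteq> Xint" "{p<..<q} \<inter> g -` S = {}"
      using subX bij_betwE[OF g] avoid by blast+
  qed
  then have kg: "strict_mono_on {p<..<q} (k \<circ> g)" ..
  have hk: "h (g x) = k (g x)" if "x \<in> {p<..<q}" for x
  proof -
    have "x \<in> Xint"
      using that subX by blast
    then have "g x \<in> Xint" "g x \<notin> E"
      using bij_betwE[OF g] that avoid by blast+
    then show ?thesis
      by (simp add: E_def)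
  qed
  have "strict_mono_on {p<..<q} (h \<circ> g)"
  proof (rule monotone_onI)
    fix x y assume "x \<in> {p<..<q}" "y \<in> {p<..<q}" "x < y"
    then show "(h \<circ> g) x < (h \<circ> g) y"
      using monotone_onD[OF kg] hk by simp
  qed
  with pq show ?thesis
    by (rule that)
qed

lemma conj_rotX_not_in_PCplus:
  assumes g: "bij_betw g Xint Xint"
    and dec: "0 \<le> a1" "a1 < b1" "b1 \<le> 1" "strict_antimono_on {a1<..<b1} g"
    and inc: "0 \<le> a2" "a2 < b2" "b2 \<le> 1" "continuous_on {a2<..<b2} g" "strict_mono_on {a2<..<b2} g"
  shows "\<not> in_PCplus (g \<circ> rotX (a1 - a2) \<circ> invX g)"
proof
  define d where "d = min (b1 - a1) (b2 - a2)"
  have sub: "{a2<..<a2 + d} \<subseteq> {a2<..<b2}"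
    by (auto simp: d_def)
  assume "in_PCplus (g \<circ> rotX (a1 - a2) \<circ> invX g)"
  moreover have "0 \<le> a2" "a2 < a2 + d" "a2 + d \<le> 1"
    using dec inc by (auto simp: d_def)
  moreover note continuous_on_subset[OF inc(4) sub] monotone_on_subset[OF inc(5) sub]
  ultimately obtain p q where pq: "a2 \<le> p" "p < q" "q \<le> a2 + d"
    and mono: "strict_mono_on {p<..<q} (g \<circ> rotX (a1 - a2) \<circ> invX g \<circ> g)"
    using g by (elim in_PCplus_comp_strict_mono_on_subinterval)
  \<comment> \<open>On \<open>]p, q[\<close> this map is \<open>x \<mapsto> g (x + a1 - a2)\<close>, which is decreasing.\<close>
  have shift: "(g \<circ> rotX (a1 - a2) \<circ> invX g \<circ> g) x = g (x + (a1 - a2))" if "x \<in> {p<..<q}" for x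
  proof -
    have "x \<in> Xint"
      using that pq inc by (auto simp: Xint_def d_def)
    moreover have "rotX (a1 - a2) x = x + (a1 - a2)"
      using that pq dec unfolding rotX_def d_def by (intro frac_eq_id) auto
    ultimately show ?thesis
      using invX_f[OF g] by simp
  qed
  define x y where "x = p + (q - p) / 3" and "y = p + 2 * (q - p) / 3"
  have xy: "x \<in> {p<..<q}" "y \<in> {p<..<q}" "x < y"
    using pq(2) by (auto simp: x_def y_def field_simps)
  then have "g (x + (a1 - a2)) < g (y + (a1 - a2))"
    using monotone_onD[OF mono xy] shift by simp
  moreover have "x + (a1 - a2) \<in> {a1<..<b1}" "y + (a1 - a2) \<in> {a1<..<b1}"
    using xy pq by (auto simp: d_def)
  then have "g (y + (a1 - a2)) < g (x + (a1 - a2))"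
    using monotone_onD[OF dec(4)] xy(3) by simp
  ultimately show False
    by simp
qed

lemma in_PCminus_if_piecewise_decr:
  assumes g: "bij_betw g Xint Xint" and F: "finite F"
    and decr: "\<And>a b. 0 \<le> a \<Longrightarrow> b \<le> 1 \<Longrightarrow> {a<..<b} \<inter> F = {} \<Longrightarrow>
      continuous_on {a<..<b} g \<and> strict_antimono_on {a<..<b} g"
  shows "in_PCminus g"
proof -
  have "continuous_on {a<..<b} (\<lambda>x. 1 - g x) \<and> strict_mono_on {a<..<b} (\<lambda>x. 1 - g x)"
    if "0 \<le> a" "b \<le> 1" "{a<..<b} \<inter> F = {}" for a b
  proof
    show "continuous_on {a<..<b} (\<lambda>x. 1 - g x)"
      using decr[OF that] by (intro continuous_intros) simp
    show "strict_mono_on {a<..<b} (\<lambda>x. 1 - g x)"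
      using decr[OF that] by (auto simp: monotone_on_def)
  qed
  with F have "piecewise_incr F (\<lambda>x. 1 - g x)"
    unfolding piecewise_incr_def by blast
  moreover have "inj_on g Xint"
    using g by (simp add: bij_betw_def)
  ultimately have "\<exists>T. piecewise_incr T (reflX \<circ> g)"
    using piecewise_incr_fin_eq fin_eq_reflX_comp by blast
  then have "reflX \<circ> g \<in> PCplus_hat"
    using bij_betw_trans[OF g bij_betw_reflX] by (simp add: PCplus_hat_iff)
  moreover have "fin_eq g (reflX \<circ> (reflX \<circ> g))"
    using bij_betwE[OF g] by (intro fin_eq_if_eq_on_Xint) (simp add: reflX_reflX)
  ultimately show ?thesis
    unfolding in_PCminus_def using reflX_PCbowtie_hat fin_eq_reflX by blast
qed

lemma in_PCpm_if_normalizes_PCplus: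
  assumes g: "g \<in> PCbowtie_hat" and N: "normalizes_PCplus g"
  shows "in_PCpm g"
proof -
  have gb: "bij_betw g Xint Xint"
    using g by (simp add: PCbowtie_hat_def)
  obtain F where F: "finite F" and pieces: "\<And>a b. 0 \<le> a \<Longrightarrow> b \<le> 1 \<Longrightarrow> {a<..<b} \<inter> F = {} \<Longrightarrow>
      continuous_on {a<..<b} g \<and> (strict_mono_on {a<..<b} g \<or> strict_antimono_on {a<..<b} g)"
    using PCbowtie_hat_piecewise_monotone[OF g] by blast
  consider (incr) "\<forall>a b. 0 \<le> a \<longrightarrow> b \<le> 1 \<longrightarrow> {a<..<b} \<inter> F = {} \<longrightarrow> strict_mono_on {a<..<b} g"
    | (decr) "\<forall>a b. 0 \<le> a \<longrightarrow> b \<le> 1 \<longrightarrow> {a<..<b} \<inter> F = {} \<longrightarrow> strict_antimono_on {a<..<b} g"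
    | (mixed) a1 b1 a2 b2 where "0 \<le> a1" "b1 \<le> 1" "{a1<..<b1} \<inter> F = {}" "\<not> strict_mono_on {a1<..<b1} g"
      "0 \<le> a2" "b2 \<le> 1" "{a2<..<b2} \<inter> F = {}" "\<not> strict_antimono_on {a2<..<b2} g"
    by blast
  then show ?thesis
  proof cases
    case incr
    with F pieces have "piecewise_incr F g"
      unfolding piecewise_incr_def by blast
    with gb show ?thesis
      by (simp add: in_PCpm_def in_PCplus_if_PCplus_hat PCplus_hat_if_piecewise_incr)
  next
    case decr
    with gb F pieces show ?thesis
      by (simp add: in_PCpm_def in_PCminus_if_piecewise_decr)
  next
    case mixed
    have "a1 < b1" "a2 < b2"
      using mixed(4,8) by (auto simp: monotone_on_def)
    moreover have "strict_antimono_on {a1<..<b1} g"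
      using pieces[OF mixed(1-3)] mixed(4) by blast
    moreover have "continuous_on {a2<..<b2} g" "strict_mono_on {a2<..<b2} g"
      using pieces[OF mixed(5-7)] mixed(8) by blast+
    ultimately have "\<not> in_PCplus (g \<circ> rotX (a1 - a2) \<circ> invX g)"
      using conj_rotX_not_in_PCplus[OF gb] mixed by blast
    moreover have "in_PCplus (g \<circ> rotX (a1 - a2) \<circ> invX g)"
      using N rotX_PCplus_hat by (simp add: normalizes_PCplus_def)
    ultimately show ?thesis
      by contradiction
  qed
qed

theorem proposition5p2:
  assumes "g \<in> PCbowtie_hat"
  shows "normalizes_PCplus g \<longleftrightarrow> in_PCpm g"
proof
  show "normalizes_PCplus g \<Longrightarrow> in_PCpm g"
    using assms by (rule in_PCpm_if_normalizes_PCplus)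
  show "in_PCpm g \<Longrightarrow> normalizes_PCplus g"
    using assms by (intro normalizes_PCplus_if_in_PCpm) (simp_all add: PCbowtie_hat_def)
qed

end
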